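(* Let $w\in W_+$ and let $\ell\in\{1,\dots,m\}$ be such that $w\theta_\ell\neq\theta$. Then $\theta\notin wR_\ell$.
   Context: $R$ is an irreducible reduced root system in $V=\mathbb C^n$ with Weyl group $W$, positive roots $R_+$, simple roots $\Delta=\{\alpha_1,\dots,\alpha_n\}$ and maximal root $\theta$ (with respect to $\Delta$). Fix $S_0\subset\Delta$, $W_+=\{w\in W:wS_0\subset R_+\}$, $V_0=\mathrm{span}(S_0)$, and let $R_0=V_0\cap R$ (a root system with simple roots $S_0$) decompose into irreducible components $R_0=\bigsqcup_{\ell=1}^m R_\ell$; $S_\ell=S_0\cap R_\ell$ and $\theta_\ell$ is the maximal root of $R_\ell$ with respect to $S_\ell$. *)

theory Defs
  imports "HOL-Analysis.Analysis"
begin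

text \<open>Root systems in V = complex^'n (Bourbaki-style: a root system is a finite spanning
set R not containing 0, together with coroots cor a, which are complex-linear forms with
cor a a = 2, such that the reflection x - cor a x a maps R onto R and cor a b is an
integer for all roots a, b).\<close>

type_synonym 'n V = "complex ^ 'n"

definition refl :: "('n::finite V \<Rightarrow> complex) \<Rightarrow> 'n V \<Rightarrow> 'n V \<Rightarrow> 'n V" where
  "refl f a x = x - (f x) *s a"

definition root_system :: "'n::finite V set \<Rightarrow> ('n V \<Rightarrow> 'n V \<Rightarrow> complex) \<Rightarrow> bool" where
  "root_system R cor \<longleftrightarrow> finite R \<and> 0 \<notin> R \<and> vec.span R = UNIV \<and>
     (\<forall>a\<in>R. (\<forall>x y. cor a (x + y) = cor a x + cor a y) \<and>
             (\<forall>(c::complex) x. cor a (c *s x) = c * cor a x) \<and>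
             cor a a = 2 \<and>
             refl (cor a) a ` R = R \<and>
             (\<forall>b\<in>R. cor a b \<in> \<int>))"

definition reduced :: "'n::finite V set \<Rightarrow> bool" where
  "reduced R \<longleftrightarrow> (\<forall>a\<in>R. \<forall>c::complex. c *s a \<in> R \<longrightarrow> c = 1 \<or> c = -1)"

definition irreducible_rs :: "'n::finite V set \<Rightarrow> ('n V \<Rightarrow> 'n V \<Rightarrow> complex) \<Rightarrow> bool" where
  "irreducible_rs R cor \<longleftrightarrow> R \<noteq> {} \<and>
     \<not> (\<exists>R1 R2. R1 \<noteq> {} \<and> R2 \<noteq> {} \<and> R = R1 \<union> R2 \<and> R1 \<inter> R2 = {} \<and>
              (\<forall>a\<in>R1. \<forall>b\<in>R2. cor a b = 0))"

inductive_set weyl :: "'n::finite V set \<Rightarrow> ('n V \<Rightarrow> 'n V \<Rightarrow> complex) \<Rightarrow> ('n V \<Rightarrow> 'n V) set"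
  for R cor where
  weyl_id: "id \<in> weyl R cor"
| weyl_step: "a \<in> R \<Longrightarrow> w \<in> weyl R cor \<Longrightarrow> refl (cor a) a \<circ> w \<in> weyl R cor"

definition nonneg_int_comb :: "'n::finite V set \<Rightarrow> 'n V \<Rightarrow> bool" where
  "nonneg_int_comb S x \<longleftrightarrow> (\<exists>k::'n V \<Rightarrow> nat. x = (\<Sum>d\<in>S. of_nat (k d) *s d))"

definition is_base :: "'n::finite V set \<Rightarrow> 'n V set \<Rightarrow> bool" where
  "is_base R \<Delta> \<longleftrightarrow> \<Delta> \<subseteq> R \<and> vec.independent \<Delta> \<and>
     (\<forall>a\<in>R. \<exists>k::'n V \<Rightarrow> int. a = (\<Sum>d\<in>\<Delta>. of_int (k d) *s d) \<and>
                ((\<forall>d\<in>\<Delta>. k d \<ge> 0) \<or> (\<forall>d\<in>\<Delta>. k d \<le> 0)))"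

definition pos_roots :: "'n::finite V set \<Rightarrow> 'n V set \<Rightarrow> 'n V set" where
  "pos_roots R \<Delta> = {a\<in>R. nonneg_int_comb \<Delta> a}"

definition highest_root :: "'n::finite V set \<Rightarrow> 'n V set \<Rightarrow> 'n V \<Rightarrow> bool" where
  "highest_root R \<Delta> \<theta> \<longleftrightarrow> \<theta> \<in> R \<and> (\<forall>a\<in>R. nonneg_int_comb \<Delta> (\<theta> - a))"

definition irred_component :: "'n::finite V set \<Rightarrow> ('n V \<Rightarrow> 'n V \<Rightarrow> complex) \<Rightarrow> 'n V set \<Rightarrow> bool" where
  "irred_component R0 cor C \<longleftrightarrow> C \<subseteq> R0 \<and> (\<forall>a\<in>C. \<forall>b\<in>R0 - C. cor a b = 0) \<and>
     irreducible_rs C cor"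

end

theory Submission
  imports Defs
begin

(* Suppose \<theta> = w \<beta> with \<beta> \<in> R\<^sub>l.  Since \<theta>\<^sub>l is the highest root of R\<^sub>l,
   \<theta>\<^sub>l - \<beta> is a nonnegative integer combination of S\<^sub>l = S0 \<inter> R\<^sub>l; as w is linear and sends
   every simple root of S0 to a positive root, w \<theta>\<^sub>l - \<theta> = w (\<theta>\<^sub>l - \<beta>) is a nonnegative
   integer combination of \<Delta>.  On the other hand w \<theta>\<^sub>l is a root and \<theta> is the highest root,
   so \<theta> - w \<theta>\<^sub>l is a nonnegative combination of \<Delta> as well.  Because \<Delta> is linearly
   independent, the cone of nonnegative combinations of \<Delta> contains no line, hence
   w \<theta>\<^sub>l = \<theta>, contradicting the hypothesis. *)

lemma reflection_linear:
  assumes "root_system R cor" and "a \<in> R"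
  shows "Vector_Spaces.linear (*s) (*s) (refl (cor a) a)"
proof -
  have add: "\<And>x y. cor a (x + y) = cor a x + cor a y"
    and hom: "\<And>c x. cor a (c *s x) = c * cor a x"
    using assms unfolding root_system_def by auto
  show ?thesis
    by (auto simp: Vector_Spaces.linear_iff vec.vector_space_axioms refl_def add hom
        vector_sadd_rdistrib vector_ssub_ldistrib algebra_simps)
qed

lemma weyl_linear:
  assumes "root_system R cor" and "w \<in> weyl R cor"
  shows "Vector_Spaces.linear (*s) (*s) w"
  using assms(2)
proof induction
  case weyl_id
  show ?case by (rule vec.linear_id)
next
  case (weyl_step a w)
  show ?case
    by (rule Vector_Spaces.linear_compose[OF weyl_step.IH reflection_linear[OF assms(1) weyl_step.hyps(1)]])
qed

lemma weyl_maps_roots: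
  assumes "root_system R cor" and "w \<in> weyl R cor"
  shows "w ` R \<subseteq> R"
  using assms(2)
proof induction
  case weyl_id
  show ?case by simp
next
  case (weyl_step a w)
  have "refl (cor a) a ` R = R" using assms(1) weyl_step.hyps(1) unfolding root_system_def by auto
  then show ?case using weyl_step.IH by (auto simp: image_subset_iff)
qed

lemma nonneg_int_comb_zero: "nonneg_int_comb S 0"
  unfolding nonneg_int_comb_def by (rule exI[of _ "\<lambda>_. 0"]) simp

lemma nonneg_int_comb_add:
  assumes "nonneg_int_comb S x" and "nonneg_int_comb S y"
  shows "nonneg_int_comb S (x + y)"
proof -
  obtain k l where "x = (\<Sum>d\<in>S. of_nat (k d) *s d)" and "y = (\<Sum>d\<in>S. of_nat (l d) *s d)"
    using assms unfolding nonneg_int_comb_def by auto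
  then have "x + y = (\<Sum>d\<in>S. of_nat (k d + l d) *s d)"
    by (simp add: sum.distrib vector_sadd_rdistrib)
  then show ?thesis unfolding nonneg_int_comb_def by (intro exI[of _ "\<lambda>d. k d + l d"])
qed

lemma nonneg_int_comb_scale:
  assumes "nonneg_int_comb S x"
  shows "nonneg_int_comb S (of_nat n *s x)"
proof -
  obtain k where "x = (\<Sum>d\<in>S. of_nat (k d) *s d)"
    using assms unfolding nonneg_int_comb_def by auto
  then have "of_nat n *s x = (\<Sum>d\<in>S. of_nat (n * k d) *s d)"
    by (simp add: vector_smult_assoc vec.scale_sum_right)
  then show ?thesis unfolding nonneg_int_comb_def by (intro exI[of _ "\<lambda>d. n * k d"])
qed

lemma nonneg_int_comb_sum:
  assumes "\<And>d. d \<in> A \<Longrightarrow> nonneg_int_comb S (f d)"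
  shows "nonneg_int_comb S (\<Sum>d\<in>A. f d)"
proof (cases "finite A")
  case True
  then show ?thesis using assms
    by induction (auto simp: nonneg_int_comb_zero nonneg_int_comb_add)
qed (simp add: nonneg_int_comb_zero)

lemma nonneg_int_comb_linear_image:
  assumes "Vector_Spaces.linear (*s) (*s) f"
    and "nonneg_int_comb S x"
    and "\<And>d. d \<in> S \<Longrightarrow> nonneg_int_comb T (f d)"
  shows "nonneg_int_comb T (f x)"
proof -
  obtain k where "x = (\<Sum>d\<in>S. of_nat (k d) *s d)"
    using assms(2) unfolding nonneg_int_comb_def by auto
  then have "f x = (\<Sum>d\<in>S. of_nat (k d) *s f d)"
    by (simp add: vec.linear_sum[OF assms(1)] vec.linear_scale[OF assms(1)])
  then show ?thesis
    by (simp add: nonneg_int_comb_sum nonneg_int_comb_scale assms(3))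
qed

lemma nonneg_int_comb_pointed:
  fixes \<Delta> :: "'n::finite V set"
  assumes "vec.independent \<Delta>"
    and "nonneg_int_comb \<Delta> x" and "nonneg_int_comb \<Delta> (- x)"
  shows "x = 0"
proof -
  have fin: "finite \<Delta>" using vec.finiteI_independent[OF assms(1)] .
  obtain p q where p: "x = (\<Sum>d\<in>\<Delta>. of_nat (p d) *s d)"
    and q: "- x = (\<Sum>d\<in>\<Delta>. of_nat (q d) *s d)"
    using assms(2,3) unfolding nonneg_int_comb_def by auto
  have "(\<Sum>d\<in>\<Delta>. (of_nat (p d + q d) :: complex) *s d)
        = (\<Sum>d\<in>\<Delta>. of_nat (p d) *s d) + (\<Sum>d\<in>\<Delta>. of_nat (q d) *s d)"
    by (simp add: sum.distrib vector_sadd_rdistrib)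
  also have "\<dots> = 0" by (simp flip: p q)
  finally have "(\<Sum>d\<in>\<Delta>. (of_nat (p d + q d) :: complex) *s d) = 0" .
  then have "\<forall>d\<in>\<Delta>. (of_nat (p d + q d) :: complex) = 0"
    using assms(1) unfolding vec.dependent_finite[OF fin] by auto
  then have "\<forall>d\<in>\<Delta>. p d = 0" by (simp del: of_nat_add add: of_nat_add[symmetric])
  then show ?thesis unfolding p by simp
qed

theorem mainTheorem4:
  fixes R :: "(complex ^ 'n::finite) set"
    and cor :: "complex ^ 'n \<Rightarrow> complex ^ 'n \<Rightarrow> complex"
    and \<Delta> S0 Rl :: "(complex ^ 'n) set"
    and \<theta> \<theta>l :: "complex ^ 'n"
    and w :: "complex ^ 'n \<Rightarrow> complex ^ 'n"
  assumes "root_system R cor" and "reduced R" and "irreducible_rs R cor"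
    and "is_base R \<Delta>" and "highest_root R \<Delta> \<theta>"
    and "S0 \<subseteq> \<Delta>"
    and "w \<in> weyl R cor" and "w ` S0 \<subseteq> pos_roots R \<Delta>"
    and "irred_component (vec.span S0 \<inter> R) cor Rl"
    and "highest_root Rl (S0 \<inter> Rl) \<theta>l"
    and "w \<theta>l \<noteq> \<theta>"
  shows "\<theta> \<notin> w ` Rl"
proof
  assume "\<theta> \<in> w ` Rl"
  then obtain \<beta> where \<beta>: "\<beta> \<in> Rl" and \<theta>_eq: "\<theta> = w \<beta>" by auto
  have lin: "Vector_Spaces.linear (*s) (*s) w" by (rule weyl_linear[OF assms(1,7)])
  have simple_pos: "\<And>d. d \<in> S0 \<inter> Rl \<Longrightarrow> nonneg_int_comb \<Delta> (w d)"
    using assms(8) by (auto simp: pos_roots_def)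
  have "nonneg_int_comb (S0 \<inter> Rl) (\<theta>l - \<beta>)"
    using assms(10) \<beta> unfolding highest_root_def by auto
  then have "nonneg_int_comb \<Delta> (w (\<theta>l - \<beta>))"
    by (rule nonneg_int_comb_linear_image[OF lin]) (rule simple_pos)
  then have above: "nonneg_int_comb \<Delta> (w \<theta>l - \<theta>)"
    by (simp add: \<theta>_eq vec.linear_diff[OF lin])
  have "\<theta>l \<in> R" using assms(9,10) unfolding irred_component_def highest_root_def by auto
  then have "w \<theta>l \<in> R" using weyl_maps_roots[OF assms(1,7)] by auto
  then have below: "nonneg_int_comb \<Delta> (- (w \<theta>l - \<theta>))"
    using assms(5) unfolding highest_root_def by simp
  have "vec.independent \<Delta>" using assms(4) unfolding is_base_def by simp
  then have "w \<theta>l - \<theta> = 0" using above below by (rule nonneg_int_comb_pointed)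
  then show False using assms(11) by simp
qed

end
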